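(* Let $C_1$ be a positive squarefree integer and $q$ a prime. Let $(x, y, \alpha, p)$ be a solution in integers to \[ C_1x^2 + q^\alpha = y^p, \quad \gcd(C_1x, q, y) = 1, \quad x, y > 0, \quad \alpha > 0, \] with $y$ even and $p \ge 11$ prime. Let $\ell$ be a prime with $\ell = 2mp + 1$ for some integer $m > 0$ and $\ell \nmid 2qC_1y$. Let $\beta$ be the unique integer in $\{0, 1, \dots, 2p-1\}$ with $\beta \equiv \alpha \pmod{2p}$. Then there exists $\omega \in \{0, 1, \dots, \ell-1\}$ with \[ (C_1\omega^2 + q^\beta)^{2m} \equiv 1 \pmod \ell \] such that the reduction of $F_{x,\alpha}$ over $\mathbb{F}_\ell$ is either isomorphic to the curve \[ F_{\omega,\beta}/\mathbb{F}_\ell: Y^2 + XY = X^3 + \frac{C_1\omega - 1}{4}X^2 + \frac{C_1^2\omega^2 + C_1q^\beta}{64}X \] or to its quadratic twist by $q \bmod \ell$.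
   Context: $F_{x,\alpha}$ is the elliptic curve over $\mathbb{Q}$ given by $Y^2 + XY = X^3 + \frac{C_1x-1}{4}X^2 + \frac{C_1^2x^2 + C_1q^\alpha}{64}X$. Coefficients of $F_{\omega,\beta}$ are interpreted in $\mathbb{F}_\ell$ (division by $4$ and $64$ being inversion modulo the odd prime $\ell$). *)

theory Defs
  imports "HOL-Number_Theory.Number_Theory" "HOL-Computational_Algebra.Squarefree"
begin

text \<open>A generalized Weierstrass equation
  Y^2 + a1 XY + a3 Y = X^3 + a2 X^2 + a4 X + a6 is recorded by its
  coefficient tuple (a1, a2, a3, a4, a6).\<close>

type_synonym 'a weq = "'a \<times> 'a \<times> 'a \<times> 'a \<times> 'a"

definition rat_red :: "int \<Rightarrow> rat \<Rightarrow> int" where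
  "rat_red l r = (fst (quotient_of r) * modular_inverse l (snd (quotient_of r))) mod l"

definition weq_red :: "int \<Rightarrow> rat weq \<Rightarrow> int weq" where
  "weq_red l E = (case E of (a1, a2, a3, a4, a6) \<Rightarrow>
     (rat_red l a1, rat_red l a2, rat_red l a3, rat_red l a4, rat_red l a6))"

definition F_curve :: "int \<Rightarrow> int \<Rightarrow> int \<Rightarrow> nat \<Rightarrow> rat weq" where
  "F_curve C1 q x \<alpha> =
     (1, (of_int C1 * of_int x - 1) / 4, 0,
      (of_int C1 ^ 2 * of_int x ^ 2 + of_int C1 * of_int q ^ \<alpha>) / 64, 0)"

text \<open>Isomorphism over F_l of Weierstrass equations with coefficients in Z/lZ
  (represented by integers): an admissible change of variables
  X = u^2 X' + r, Y = u^3 Y' + s u^2 X' + t with u a unit (Silverman, Table 3.1).\<close>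
definition weq_iso :: "int \<Rightarrow> int weq \<Rightarrow> int weq \<Rightarrow> bool" where
  "weq_iso l E E' = (case E of (a1, a2, a3, a4, a6) \<Rightarrow> case E' of (b1, b2, b3, b4, b6) \<Rightarrow>
     (\<exists>u r s t. \<not> l dvd u \<and>
        [u * b1 = a1 + 2 * s] (mod l) \<and>
        [u ^ 2 * b2 = a2 - s * a1 + 3 * r - s ^ 2] (mod l) \<and>
        [u ^ 3 * b3 = a3 + r * a1 + 2 * t] (mod l) \<and>
        [u ^ 4 * b4 = a4 - s * a3 + 2 * r * a2 - (t + r * s) * a1 + 3 * r ^ 2 - 2 * s * t] (mod l) \<and>
        [u ^ 6 * b6 = a6 + r * a4 + r ^ 2 * a2 + r ^ 3 - t * a3 - t ^ 2 - r * t * a1] (mod l)))"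

text \<open>Quadratic twist by d over F_l (l odd): completing the square gives
  y^2 = x^3 + (b2/4) x^2 + (b4/2) x + b6/4; its twist by d is
  y^2 = x^3 + d (b2/4) x^2 + d^2 (b4/2) x + d^3 (b6/4).\<close>
definition weq_twist :: "int \<Rightarrow> int \<Rightarrow> int weq \<Rightarrow> int weq" where
  "weq_twist l d E = (case E of (a1, a2, a3, a4, a6) \<Rightarrow>
     (let b2 = a1 ^ 2 + 4 * a2; b4 = 2 * a4 + a1 * a3; b6 = a3 ^ 2 + 4 * a6;
          i2 = modular_inverse l 2; i4 = modular_inverse l 4
      in (0, (d * b2 * i4) mod l, 0, (d ^ 2 * b4 * i2) mod l, (d ^ 3 * b6 * i4) mod l)))"

end

theory Submission
  imports Defs
begin

text \<open>Write \<alpha> = \<beta> + 2pk and t = q^(pk), and take \<omega> \<equiv> x/t (mod l). Then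
  C1 \<omega>^2 + q^\<beta> \<equiv> y^p / t^2 = (y / (q^k)^2)^p is a p-th power of a unit of F_l, so its
  (l - 1)/p = 2m-th power is 1. Passing from (\<omega>, q^\<beta>) to (x, q^\<alpha>) multiplies x by t and
  q^\<beta> by t^2, which multiplies the invariants b2 = a1^2 + 4 a2 and a4 of F by t and t^2: so
  F_{x,\<alpha>} is the quadratic twist of F_{\<omega>,\<beta>} by t. As t is a square times 1 or q,
  according to the parity of pk, this twist is F_{\<omega>,\<beta>} itself or its twist by q.\<close>

lemma fermat_theorem_int:
  fixes l a :: int
  assumes "prime l" and "coprime a l"
  shows "[a ^ (nat l - 1) = 1] (mod l)"
proof -
  have "residues l"
    using prime_gt_1_int[OF assms(1)] by (simp add: residues_def)
  moreover have "totient (nat l) = nat l - 1"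
    using assms(1) by (intro totient_prime) simp
  ultimately show ?thesis
    using residues.euler_theorem assms(2) by metis
qed

lemma cong_pth_power_imp_pow_cong_1:
  fixes l s y z :: int and m p :: nat
  assumes "prime l" and "l = 2 * int m * int p + 1" and "coprime s l" and "coprime y l"
    and "[s ^ (2 * p) * z = y ^ p] (mod l)"
  shows "[z ^ (2 * m) = 1] (mod l)"
proof -
  have l1: "nat l - 1 = 2 * m * p"
    using assms(2) by (simp add: nat_add_distrib nat_mult_distrib)
  have "[(s ^ (nat l - 1)) ^ 2 = 1] (mod l)"
    using cong_pow[OF fermat_theorem_int[OF assms(1,3)], of 2] by simp
  then have "[1 * z ^ (2 * m) = (s ^ (nat l - 1)) ^ 2 * z ^ (2 * m)] (mod l)"
    by (rule cong_mult[OF cong_sym cong_refl])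
  also have "(s ^ (nat l - 1)) ^ 2 * z ^ (2 * m) = (s ^ (2 * p) * z) ^ (2 * m)"
    unfolding l1 by (simp add: power_mult_distrib ac_simps flip: power_mult)
  also have "[\<dots> = (y ^ p) ^ (2 * m)] (mod l)"
    by (intro cong_pow assms(5))
  also have "(y ^ p) ^ (2 * m) = y ^ (nat l - 1)"
    unfolding l1 by (simp add: ac_simps flip: power_mult)
  also have "[\<dots> = 1] (mod l)"
    by (rule fermat_theorem_int[OF assms(1,4)])
  finally show ?thesis
    by simp
qed

lemma cong_mult_solve_residue:
  fixes l t x :: int
  assumes "l > 0" and "coprime t l"
  obtains w where "w \<in> {0..l - 1}" and "[x = w * t] (mod l)"
proof
  show "x * modular_inverse l t mod l \<in> {0..l - 1}"
    using assms(1) by simp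
  have "[x * modular_inverse l t mod l * t = x * (t * modular_inverse l t)] (mod l)"
    by (simp add: cong_def mod_mult_left_eq mod_mult_right_eq ac_simps)
  also have "[x * (t * modular_inverse l t) = x * 1] (mod l)"
    by (intro cong_scalar_left cong_modular_inverse1 assms(2))
  finally show "[x = x * modular_inverse l t mod l * t] (mod l)"
    by (simp add: cong_sym_eq)
qed

lemma cong_mult_rat_red:
  fixes l a b :: int
  assumes "coprime b l"
  shows "[b * rat_red l (of_int a / of_int b) = a] (mod l)"
proof (cases "b = 0")
  case True
  then have "is_unit l" using assms by simp
  then show ?thesis by (simp add: cong_iff_dvd_diff unit_imp_dvd)
next
  case False
  obtain n d where nd: "quotient_of (of_int a / of_int b) = (n, d)"
    by (cases "quotient_of (of_int a / of_int b)") auto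
  have "d > 0" using quotient_of_denom_pos[OF nd] .
  have "(of_int a / of_int b :: rat) = of_int n / of_int d" using quotient_of_div[OF nd] .
  then have "a * d = n * b" using \<open>d > 0\<close> \<open>b \<noteq> 0\<close>
    by (simp add: field_simps) (metis of_int_eq_iff of_int_mult)
  then have "d dvd b"
    using quotient_of_coprime[OF nd] by (metis coprime_commute coprime_dvd_mult_right_iff dvd_triv_right)
  then have dl: "coprime d l" using assms by (metis coprime_mult_left_iff dvd_def)
  have "[d * (b * rat_red l (of_int a / of_int b)) = d * (b * (n * modular_inverse l d))] (mod l)"
    unfolding rat_red_def nd by (intro cong_scalar_left) (simp add: cong_def)
  also have "d * (b * (n * modular_inverse l d)) = b * n * (d * modular_inverse l d)"
    by (simp add: ac_simps)
  also have "[b * n * (d * modular_inverse l d) = b * n * 1] (mod l)"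
    by (intro cong_scalar_left cong_modular_inverse1 dl)
  also have "b * n * 1 = d * a" using \<open>a * d = n * b\<close> by (simp add: ac_simps)
  finally show ?thesis using dl by (simp add: cong_mult_lcancel)
qed

lemma weq_red_F_curve:
  fixes l C1 q x :: int
  assumes "l > 1" and "odd l"
  obtains a2 a4 where "weq_red l (F_curve C1 q x n) = (1, a2, 0, a4, 0)"
    and "[1 + 4 * a2 = C1 * x] (mod l)"
    and "[64 * a4 = C1 ^ 2 * x ^ 2 + C1 * q ^ n] (mod l)"
proof
  have "coprime 4 l" and "coprime 64 l"
    using assms(2) coprime_power_left_iff[of 2 2 l] coprime_power_left_iff[of 2 6 l] by auto
  show "weq_red l (F_curve C1 q x n) =
    (1, rat_red l (of_int (C1 * x - 1) / of_int 4), 0,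
     rat_red l (of_int (C1 ^ 2 * x ^ 2 + C1 * q ^ n) / of_int 64), 0)"
    using assms(1) by (simp add: weq_red_def F_curve_def rat_red_def)
  have "[4 * rat_red l (of_int (C1 * x - 1) / of_int 4) = C1 * x - 1] (mod l)"
    by (rule cong_mult_rat_red) fact
  then show "[1 + 4 * rat_red l (of_int (C1 * x - 1) / of_int 4) = C1 * x] (mod l)"
    using cong_add_lcancel[of 1 _ "C1 * x - 1" l] by simp
  show "[64 * rat_red l (of_int (C1 ^ 2 * x ^ 2 + C1 * q ^ n) / of_int 64) =
         C1 ^ 2 * x ^ 2 + C1 * q ^ n] (mod l)"
    by (rule cong_mult_rat_red) fact
qed

lemma weq_twist_a3_a6_zero:
  fixes l d a1 a2 a4 :: int
  assumes "odd l"
  obtains c2 c4 where "weq_twist l d (a1, a2, 0, a4, 0) = (0, c2, 0, c4, 0)"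
    and "[4 * c2 = d * (a1 ^ 2 + 4 * a2)] (mod l)" and "[c4 = d ^ 2 * a4] (mod l)"
proof
  have "coprime 4 l" and "coprime 2 l"
    using assms coprime_power_left_iff[of 2 2 l] by auto
  define i2 i4 where "i2 = modular_inverse l 2" and "i4 = modular_inverse l 4"
  show "weq_twist l d (a1, a2, 0, a4, 0) =
    (0, d * (a1 ^ 2 + 4 * a2) * i4 mod l, 0, d ^ 2 * (2 * a4) * i2 mod l, 0)"
    unfolding weq_twist_def i2_def i4_def by (simp add: Let_def)
  have "[4 * (d * (a1 ^ 2 + 4 * a2) * i4 mod l) = d * (a1 ^ 2 + 4 * a2) * (4 * i4)] (mod l)"
    by (simp add: cong_def mod_mult_right_eq ac_simps)
  also have "[d * (a1 ^ 2 + 4 * a2) * (4 * i4) = d * (a1 ^ 2 + 4 * a2) * 1] (mod l)"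
    unfolding i4_def by (intro cong_scalar_left cong_modular_inverse1) fact
  finally show "[4 * (d * (a1 ^ 2 + 4 * a2) * i4 mod l) = d * (a1 ^ 2 + 4 * a2)] (mod l)"
    by simp
  have "[d ^ 2 * (2 * a4) * i2 mod l = d ^ 2 * a4 * (2 * i2)] (mod l)"
    by (simp add: cong_def ac_simps)
  also have "[d ^ 2 * a4 * (2 * i2) = d ^ 2 * a4 * 1] (mod l)"
    unfolding i2_def by (intro cong_scalar_left cong_modular_inverse1) fact
  finally show "[d ^ 2 * (2 * a4) * i2 mod l = d ^ 2 * a4] (mod l)"
    by simp
qed

lemma weq_iso_a3_a6_zeroI:
  fixes l u a1 a2 a4 b1 b2 b4 :: int
  assumes "odd l" and "\<not> l dvd u"
    and b2: "[u ^ 2 * (b1 ^ 2 + 4 * b2) = a1 ^ 2 + 4 * a2] (mod l)"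
    and a4: "[u ^ 4 * b4 = a4] (mod l)"
  shows "weq_iso l (a1, a2, 0, a4, 0) (b1, b2, 0, b4, 0)"
proof -
  have "coprime 4 l" and "coprime 2 l"
    using assms(1) coprime_power_left_iff[of 2 2 l] by auto
  \<comment> \<open>Take r = t = 0 and s = (u b1 - a1)/2: the conditions of weq_iso then reduce to
    the two hypotheses.\<close>
  define s where "s = (u * b1 - a1) * modular_inverse l 2"
  have s: "[2 * s = u * b1 - a1] (mod l)"
    using cong_scalar_left[OF cong_modular_inverse1[OF \<open>coprime 2 l\<close>], of "u * b1 - a1"]
    unfolding s_def by (simp add: ac_simps)
  have u_b1: "[u * b1 = a1 + 2 * s] (mod l)"
    using cong_sym[OF cong_add[OF cong_refl[of a1] s]] by simp
  have u_b2: "[u ^ 2 * b2 = a2 - s * a1 - s ^ 2] (mod l)"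
  proof -
    have "4 * (a2 - s * a1 - s ^ 2) = 4 * a2 - 2 * (2 * s) * a1 - (2 * s) ^ 2"
      by (simp add: algebra_simps power2_eq_square)
    also have "[\<dots> = 4 * a2 - 2 * (u * b1 - a1) * a1 - (u * b1 - a1) ^ 2] (mod l)"
      by (intro cong_diff cong_mult cong_pow s cong_refl)
    also have "4 * a2 - 2 * (u * b1 - a1) * a1 - (u * b1 - a1) ^ 2 = (a1 ^ 2 + 4 * a2) - u ^ 2 * b1 ^ 2"
      by (simp add: algebra_simps power2_eq_square)
    also have "[\<dots> = u ^ 2 * (b1 ^ 2 + 4 * b2) - u ^ 2 * b1 ^ 2] (mod l)"
      by (intro cong_diff cong_sym[OF b2] cong_refl)
    also have "u ^ 2 * (b1 ^ 2 + 4 * b2) - u ^ 2 * b1 ^ 2 = 4 * (u ^ 2 * b2)"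
      by (simp add: algebra_simps)
    finally have "[4 * (a2 - s * a1 - s ^ 2) = 4 * (u ^ 2 * b2)] (mod l)" .
    then show ?thesis
      using cong_mult_lcancel[OF \<open>coprime 4 l\<close>] cong_sym by blast
  qed
  show ?thesis
    unfolding weq_iso_def prod.case
    by (rule exI[of _ u], rule exI[of _ 0], rule exI[of _ s], rule exI[of _ 0])
      (simp add: assms(2) a4 u_b1 u_b2)
qed

lemma weq_red_F_curve_rescale:
  fixes l C1 q x w t :: int
  assumes "l > 1" and "odd l"
    and x: "[x = w * t] (mod l)" and Q: "[q ^ a = q ^ b * t ^ 2] (mod l)"
  obtains a2 a4 b2 b4
  where "weq_red l (F_curve C1 q x a) = (1, a2, 0, a4, 0)"
    and "weq_red l (F_curve C1 q w b) = (1, b2, 0, b4, 0)"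
    and "[1 + 4 * a2 = t * (1 + 4 * b2)] (mod l)"
    and "[a4 = t ^ 2 * b4] (mod l)"
proof -
  obtain a2 a4 where Ea: "weq_red l (F_curve C1 q x a) = (1, a2, 0, a4, 0)"
    and a2: "[1 + 4 * a2 = C1 * x] (mod l)"
    and a4: "[64 * a4 = C1 ^ 2 * x ^ 2 + C1 * q ^ a] (mod l)"
    using weq_red_F_curve[OF assms(1,2)] .
  obtain b2 b4 where Eb: "weq_red l (F_curve C1 q w b) = (1, b2, 0, b4, 0)"
    and b2: "[1 + 4 * b2 = C1 * w] (mod l)"
    and b4: "[64 * b4 = C1 ^ 2 * w ^ 2 + C1 * q ^ b] (mod l)"
    using weq_red_F_curve[OF assms(1,2)] .
  have "[1 + 4 * a2 = C1 * (w * t)] (mod l)"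
    using a2 cong_scalar_left[OF x] cong_trans by blast
  moreover have "[t * (1 + 4 * b2) = C1 * (w * t)] (mod l)"
    using cong_scalar_left[OF b2, of t] by (simp add: ac_simps)
  ultimately have "[1 + 4 * a2 = t * (1 + 4 * b2)] (mod l)"
    by (metis cong_sym cong_trans)
  moreover have "[a4 = t ^ 2 * b4] (mod l)"
  proof -
    have "coprime 64 l"
      using assms(2) coprime_power_left_iff[of 2 6 l] by auto
    have "[64 * a4 = C1 ^ 2 * (w * t) ^ 2 + C1 * (q ^ b * t ^ 2)] (mod l)"
      using a4 by (rule cong_trans) (intro cong_add cong_scalar_left cong_pow x Q)
    also have "C1 ^ 2 * (w * t) ^ 2 + C1 * (q ^ b * t ^ 2) = t ^ 2 * (C1 ^ 2 * w ^ 2 + C1 * q ^ b)"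
      by (simp add: algebra_simps power2_eq_square)
    also have "[\<dots> = t ^ 2 * (64 * b4)] (mod l)"
      by (intro cong_scalar_left cong_sym[OF b4])
    also have "t ^ 2 * (64 * b4) = 64 * (t ^ 2 * b4)"
      by simp
    finally show ?thesis
      using cong_mult_lcancel[OF \<open>coprime 64 l\<close>] by blast
  qed
  ultimately show thesis
    using that Ea Eb by blast
qed

lemma weq_iso_F_curve_rescale:
  fixes l C1 q x w v :: int
  assumes "l > 1" and "odd l" and "\<not> l dvd v"
    and "[x = w * v ^ 2] (mod l)" and "[q ^ a = q ^ b * (v ^ 2) ^ 2] (mod l)"
  shows "weq_iso l (weq_red l (F_curve C1 q x a)) (weq_red l (F_curve C1 q w b))"
proof -
  obtain a2 a4 b2 b4
    where Ea: "weq_red l (F_curve C1 q x a) = (1, a2, 0, a4, 0)"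
      and Eb: "weq_red l (F_curve C1 q w b) = (1, b2, 0, b4, 0)"
      and a2: "[1 + 4 * a2 = v ^ 2 * (1 + 4 * b2)] (mod l)"
      and a4: "[a4 = (v ^ 2) ^ 2 * b4] (mod l)"
    using weq_red_F_curve_rescale[OF assms(1,2,4,5)] .
  have "[v ^ 2 * (1 ^ 2 + 4 * b2) = 1 ^ 2 + 4 * a2] (mod l)"
    using cong_sym[OF a2] by simp
  moreover have "[v ^ 4 * b4 = a4] (mod l)"
    using cong_sym[OF a4] by (simp flip: power_mult)
  ultimately show ?thesis
    unfolding Ea Eb by (rule weq_iso_a3_a6_zeroI[OF assms(2,3)])
qed

lemma weq_iso_F_curve_twist:
  fixes l C1 q x w d v :: int
  assumes "l > 1" and "odd l" and "\<not> l dvd v"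
    and "[x = w * (d * v ^ 2)] (mod l)" and "[q ^ a = q ^ b * (d * v ^ 2) ^ 2] (mod l)"
  shows "weq_iso l (weq_red l (F_curve C1 q x a)) (weq_twist l d (weq_red l (F_curve C1 q w b)))"
proof -
  obtain a2 a4 b2 b4
    where Ea: "weq_red l (F_curve C1 q x a) = (1, a2, 0, a4, 0)"
      and Eb: "weq_red l (F_curve C1 q w b) = (1, b2, 0, b4, 0)"
      and a2: "[1 + 4 * a2 = d * v ^ 2 * (1 + 4 * b2)] (mod l)"
      and a4: "[a4 = (d * v ^ 2) ^ 2 * b4] (mod l)"
    using weq_red_F_curve_rescale[OF assms(1,2,4,5)] .
  obtain c2 c4 where tw: "weq_twist l d (1, b2, 0, b4, 0) = (0, c2, 0, c4, 0)"
    and c2: "[4 * c2 = d * (1 ^ 2 + 4 * b2)] (mod l)" and c4: "[c4 = d ^ 2 * b4] (mod l)"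
    using weq_twist_a3_a6_zero[OF assms(2)] .
  have "v ^ 2 * (0 ^ 2 + 4 * c2) = v ^ 2 * (4 * c2)"
    by simp
  also have "[\<dots> = v ^ 2 * (d * (1 + 4 * b2))] (mod l)"
    using c2 by (intro cong_scalar_left) simp
  also have "v ^ 2 * (d * (1 + 4 * b2)) = d * v ^ 2 * (1 + 4 * b2)"
    by (simp add: ac_simps)
  also have "[\<dots> = 1 ^ 2 + 4 * a2] (mod l)"
    using cong_sym[OF a2] by simp
  finally have b2: "[v ^ 2 * (0 ^ 2 + 4 * c2) = 1 ^ 2 + 4 * a2] (mod l)" .
  have "[v ^ 4 * c4 = v ^ 4 * (d ^ 2 * b4)] (mod l)"
    by (intro cong_scalar_left c4)
  also have "v ^ 4 * (d ^ 2 * b4) = (d * v ^ 2) ^ 2 * b4"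
    by (simp add: power_mult_distrib ac_simps flip: power_mult)
  also have "[\<dots> = a4] (mod l)"
    by (rule cong_sym[OF a4])
  finally have "[v ^ 4 * c4 = a4] (mod l)" .
  with b2 show ?thesis
    unfolding Ea Eb tw by (rule weq_iso_a3_a6_zeroI[OF assms(2,3)])
qed

lemma weq_iso_F_curve_rescale_power:
  fixes l C1 q x w :: int
  assumes "l > 1" and "odd l" and "coprime q l"
    and x: "[x = w * q ^ n] (mod l)" and Q: "[q ^ a = q ^ b * (q ^ n) ^ 2] (mod l)"
  shows "weq_iso l (weq_red l (F_curve C1 q x a)) (weq_red l (F_curve C1 q w b)) \<or>
         weq_iso l (weq_red l (F_curve C1 q x a)) (weq_twist l q (weq_red l (F_curve C1 q w b)))"
proof -
  define v where "v = q ^ (n div 2)"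
  have "\<not> l dvd v"
    using coprime_common_divisor[of v l l] assms(1,3) unfolding v_def by auto
  have qn: "q ^ n = q ^ (n mod 2) * v ^ 2"
    unfolding v_def by (metis div_mult_mod_eq power_add power_mult mult.commute)
  consider (even) "n mod 2 = 0" | (odd) "n mod 2 = 1"
    by fastforce
  then show ?thesis
  proof cases
    case even
    with qn have "q ^ n = v ^ 2" by simp
    then show ?thesis
      using weq_iso_F_curve_rescale[OF assms(1,2) \<open>\<not> l dvd v\<close>] x Q by simp
  next
    case odd
    with qn have "q ^ n = q * v ^ 2" by simp
    then show ?thesis
      using weq_iso_F_curve_twist[OF assms(1,2) \<open>\<not> l dvd v\<close>] x Q by simp
  qed
qed

theorem lemma7p1:
  fixes C1 q x y l :: int and \<alpha> p m :: nat
  assumes "C1 > 0" and "squarefree C1" and "prime q"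
    and "C1 * x ^ 2 + q ^ \<alpha> = y ^ p"
    and "gcd (gcd (C1 * x) q) y = 1"
    and "x > 0" and "y > 0" and "\<alpha> > 0"
    and "even y" and "prime p" and "p \<ge> 11"
    and "prime l" and "m > 0" and "l = 2 * int m * int p + 1"
    and "\<not> l dvd 2 * q * C1 * y"
  shows "\<exists>\<omega>\<in>{0..l - 1}.
           [(C1 * \<omega> ^ 2 + q ^ (\<alpha> mod (2 * p))) ^ (2 * m) = 1] (mod l) \<and>
           (weq_iso l (weq_red l (F_curve C1 q x \<alpha>))
                      (weq_red l (F_curve C1 q \<omega> (\<alpha> mod (2 * p)))) \<or>
            weq_iso l (weq_red l (F_curve C1 q x \<alpha>))
                      (weq_twist l q (weq_red l (F_curve C1 q \<omega> (\<alpha> mod (2 * p))))))"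
proof -
  have "int m * int p > 0"
    using assms(13) prime_gt_0_nat[OF assms(10)] by simp
  with assms(14) have "l > 2"
    by simp
  then have "odd l"
    using assms(12) prime_odd_int by blast
  have "\<not> l dvd q" and "\<not> l dvd y"
    using assms(15) by (auto intro: dvd_mult_left dvd_mult)
  then have q: "coprime q l" and y: "coprime y l"
    by (metis prime_imp_coprime[OF assms(12)] coprime_commute)+
  define \<beta> k where "\<beta> = \<alpha> mod (2 * p)" and "k = \<alpha> div (2 * p)"
  have Q: "q ^ \<alpha> = q ^ \<beta> * (q ^ (p * k)) ^ 2"
    unfolding \<beta>_def k_def by (metis mod_div_mult_eq power_add power_mult mult.commute mult.assoc)
  obtain \<omega> where "\<omega> \<in> {0..l - 1}" and x: "[x = \<omega> * q ^ (p * k)] (mod l)"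
    using cong_mult_solve_residue[of l "q ^ (p * k)"] \<open>l > 2\<close> q by auto
  have "(q ^ k) ^ (2 * p) * (C1 * \<omega> ^ 2 + q ^ \<beta>) = C1 * (\<omega> * q ^ (p * k)) ^ 2 + q ^ \<alpha>"
    unfolding Q by (simp add: algebra_simps power_mult_distrib flip: power_mult)
  also have "[\<dots> = C1 * x ^ 2 + q ^ \<alpha>] (mod l)"
    by (intro cong_add cong_scalar_left cong_pow cong_sym[OF x] cong_refl)
  also have "C1 * x ^ 2 + q ^ \<alpha> = y ^ p"
    by (rule assms(4))
  finally have "[(q ^ k) ^ (2 * p) * (C1 * \<omega> ^ 2 + q ^ \<beta>) = y ^ p] (mod l)" .
  with q have "[(C1 * \<omega> ^ 2 + q ^ \<beta>) ^ (2 * m) = 1] (mod l)"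
    by (intro cong_pth_power_imp_pow_cong_1[OF assms(12,14) _ y]) simp_all
  then show ?thesis
    using \<open>\<omega> \<in> _\<close> weq_iso_F_curve_rescale_power[OF _ \<open>odd l\<close> q x, of \<alpha> \<beta> C1] \<open>l > 2\<close> Q
    unfolding \<beta>_def by auto
qed

end
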